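(* Let $\Lambda\Subset\mathbb X$ and suppose $\rho:\mathbf F\to\mathbb C$ satisfies \[ \rho(\{s\}\cup T)=\sum_{N\subset\Lambda\setminus T}z(s)\,\gamma(s,N\mid T)\,\rho(T\cup N) \] for all $s\in\mathbb X$ and $T\Subset\mathbb X\setminus\{s\}$. Then there exists $c\in\mathbb C$ such that $\rho(X)=Z(X,\Lambda)\,c$ for all $X\Subset\mathbb X$. In particular, if $\rho(\varnothing)\neq0$, then $Z(\Lambda)\neq0$ and $R(X,\Lambda)=\rho(X)/\rho(\varnothing)$ for all $X\Subset\mathbb X$.
   Context: $\mathbb X$ is a finite or countably infinite set, $X\Subset\mathbb X$ means finite subset, $\mathbf F$ is the set of finite subsets. Fix $z:\mathbb X\to\mathbb C$, $W:\mathbf F\to\mathbb C$; $z^X=\prod_{y\in X}z(y)$. Conditional interaction: $W(X\mid B)=\prod_{C\subset B}W(X\cup C)$ if $X\cap B=\varnothing$, $W(X\mid B)=0$ if $X=\{y\}$ with $y\in B$, $W(X\mid B)=1$ otherwise. Boltzmann factor $\kappa(X\mid B)=\prod_{\varnothing\neq S\subset X}W(S\mid B)$, $\kappa(X)=\kappa(X\mid\varnothing)$, and $\kappa(s\mid B)=\kappa(\{s\}\mid B)$. Kernel: $\gamma(s,N\mid B)=\sum_{M\subset N}(-1)^{|N\setminus M|}\kappa(s\mid B\cup M)$ for $s\in\mathbb X$, $N,B\in\mathbf F$. Partition functions $Z(X,\Lambda)=\sum_{Y\subset\Lambda\setminus X}z^{X\cup Y}\kappa(X\cup Y)$, $Z(\Lambda)=Z(\varnothing,\Lambda)$;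 correlations $R(X,\Lambda)=Z(X,\Lambda)/Z(\Lambda)$ when $Z(\Lambda)\neq0$ (defined for all $X\Subset\mathbb X$, not only $X\subset\Lambda$). *)

theory Defs
  imports Complex_Main "HOL-Library.Countable"
begin

text \<open>Ground set X is the type 'a (countable); finite subsets are finite sets of type 'a set.
  z :: 'a => complex, W :: 'a set => complex (only evaluated on finite sets).\<close>

definition W_cond :: "('a set \<Rightarrow> complex) \<Rightarrow> 'a set \<Rightarrow> 'a set \<Rightarrow> complex" where
  "W_cond W X B =
     (if X \<inter> B = {} then (\<Prod>C\<in>Pow B. W (X \<union> C))
      else if (\<exists>y. X = {y} \<and> y \<in> B) then 0 else 1)"

definition kappa :: "('a set \<Rightarrow> complex) \<Rightarrow> 'a set \<Rightarrow> 'a set \<Rightarrow> complex" where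
  "kappa W X B = (\<Prod>S\<in>Pow X - {{}}. W_cond W S B)"

definition gamma :: "('a set \<Rightarrow> complex) \<Rightarrow> 'a \<Rightarrow> 'a set \<Rightarrow> 'a set \<Rightarrow> complex" where
  "gamma W s N B = (\<Sum>M\<in>Pow N. (-1) ^ card (N - M) * kappa W {s} (B \<union> M))"

definition Zpart :: "('a \<Rightarrow> complex) \<Rightarrow> ('a set \<Rightarrow> complex) \<Rightarrow> 'a set \<Rightarrow> 'a set \<Rightarrow> complex" where
  "Zpart z W X \<Lambda> = (\<Sum>Y\<in>Pow (\<Lambda> - X). (\<Prod>y\<in>X \<union> Y. z y) * kappa W (X \<union> Y) {})"

definition Rcorr :: "('a \<Rightarrow> complex) \<Rightarrow> ('a set \<Rightarrow> complex) \<Rightarrow> 'a set \<Rightarrow> 'a set \<Rightarrow> complex" where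
  "Rcorr z W X \<Lambda> = Zpart z W X \<Lambda> / Zpart z W {} \<Lambda>"

end

theory Submission
  imports Defs
begin

(*
  Encode \<rho> by its upper Moebius transform relative to \<Lambda>,
  \<phi>(A) = \<Sum>\<^bsub>Y \<subseteq> \<Lambda> - A\<^esub> (-1)\<^bsup>|Y|\<^esup> \<rho>(A \<union> Y),
  so that \<rho>(X) = \<Sum>\<^bsub>Y \<subseteq> \<Lambda> - X\<^esub> \<phi>(X \<union> Y).
  Since \<gamma>(s,\<cdot>|T) is the lower Moebius transform of M \<mapsto> \<kappa>(s|T \<union> M), the equation for \<rho>
  turns into
  \<Sum>\<^bsub>U \<subseteq> \<Lambda> - (T \<union> {s})\<^esub> [\<phi>(T \<union> U \<union> {s}) - z(s) \<kappa>(s|T \<union> U) \<phi>(T \<union> U)] = 0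
  for all T, and downward induction on |\<Lambda> - T| makes every bracket vanish.
  Hence \<phi>(A) = z\<^sup>A \<kappa>(A) \<phi>(\<emptyset>), and summing back gives \<rho>(X) = Z(X,\<Lambda>) \<phi>(\<emptyset>).
*)

lemma sum_Pow_neg_one_power_card:
  assumes "finite V"
  shows "(\<Sum>K\<in>Pow V. (-1::'b::comm_ring_1) ^ card K) = (if V = {} then 1 else 0)"
proof -
  have "(\<Prod>x\<in>V. (-1::'b) + 1) = (\<Sum>K\<in>Pow V. (\<Prod>x\<in>K. -1) * (\<Prod>x\<in>V - K. 1))"
    by (rule prod_add[OF assms])
  then show ?thesis
    using assms by (auto simp: power_0_left card_eq_0_iff)
qed

lemma sum_Pow_neg_one_power_card_Diff:
  assumes "finite V"
  shows "(\<Sum>K\<in>Pow V. (-1::'b::comm_ring_1) ^ card (V - K)) = (if V = {} then 1 else 0)"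
proof -
  have "(\<Sum>K\<in>Pow V. (-1::'b) ^ card (V - K)) = (\<Sum>K\<in>Pow V. (-1) ^ card K)"
    by (rule sum.reindex_bij_witness[where i="\<lambda>K. V - K" and j="\<lambda>K. V - K"]) auto
  with assms show ?thesis
    by (simp add: sum_Pow_neg_one_power_card)
qed

lemma sum_Pow_Diff_eq_sum_supsets:
  assumes "Y \<subseteq> D"
  shows "(\<Sum>K\<in>Pow (D - Y). g K) = (\<Sum>V\<in>{V\<in>Pow D. Y \<subseteq> V}. g (V - Y))"
  by (rule sum.reindex_bij_witness[where i="\<lambda>V. V - Y" and j="\<lambda>K. Y \<union> K"])
    (use assms in \<open>auto simp: Un_Diff intro!: arg_cong[where f=g]\<close>)

lemma sum_Pow_Pow_swap:
  assumes "finite V"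
  shows "(\<Sum>A\<in>Pow V. \<Sum>B\<in>Pow A. F A B) = (\<Sum>B\<in>Pow V. \<Sum>A\<in>{A\<in>Pow V. B \<subseteq> A}. F A B)"
proof -
  have "(\<Sum>A\<in>Pow V. \<Sum>B\<in>Pow A. F A B) = (\<Sum>A\<in>Pow V. \<Sum>B\<in>{B\<in>Pow V. B \<subseteq> A}. F A B)"
    by (intro sum.cong) auto
  also have "\<dots> = (\<Sum>B\<in>Pow V. \<Sum>A\<in>{A\<in>Pow V. B \<subseteq> A}. F A B)"
    by (rule sum.swap_restrict) (use assms in auto)
  finally show ?thesis .
qed

lemma moebius_inversion_Pow:
  assumes "finite V"
  shows "(\<Sum>A\<in>Pow V. \<Sum>B\<in>Pow A. (-1::'b::comm_ring_1) ^ card (A - B) * f B) = f V"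
proof -
  have "(\<Sum>A\<in>Pow V. \<Sum>B\<in>Pow A. (-1::'b) ^ card (A - B) * f B)
      = (\<Sum>B\<in>Pow V. f B * (\<Sum>A\<in>{A\<in>Pow V. B \<subseteq> A}. (-1) ^ card (A - B)))"
    by (simp add: sum_Pow_Pow_swap[OF assms] sum_distrib_left mult.commute)
  also have "\<dots> = (\<Sum>B\<in>Pow V. f B * (\<Sum>K\<in>Pow (V - B). (-1) ^ card K))"
    by (intro sum.cong refl) (simp add: sum_Pow_Diff_eq_sum_supsets)
  also have "\<dots> = (\<Sum>B\<in>Pow V. if B = V then f B else 0)"
    using assms by (intro sum.cong refl) (auto simp: sum_Pow_neg_one_power_card finite_subset)
  also have "\<dots> = f V"
    using assms by (simp add: sum.delta')
  finally show ?thesis .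
qed

definition moebius_upper :: "'a set \<Rightarrow> ('a set \<Rightarrow> 'b::comm_ring_1) \<Rightarrow> 'a set \<Rightarrow> 'b" where
  "moebius_upper D f A = (\<Sum>Y\<in>Pow (D - A). (-1) ^ card Y * f (A \<union> Y))"

lemma sum_moebius_upper:
  assumes "finite D"
  shows "(\<Sum>Y\<in>Pow (D - X). moebius_upper D f (X \<union> Y)) = f X"
proof -
  define E where "E = D - X"
  have "finite E"
    using assms by (simp add: E_def)
  have "(\<Sum>Y\<in>Pow E. moebius_upper D f (X \<union> Y))
      = (\<Sum>Y\<in>Pow E. \<Sum>V\<in>{V\<in>Pow E. Y \<subseteq> V}. (-1) ^ card (V - Y) * f (X \<union> V))"
  proof (intro sum.cong refl)
    fix Y assume "Y \<in> Pow E"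
    then have "(\<Sum>K\<in>Pow (E - Y). (-1) ^ card K * f (X \<union> (Y \<union> K)))
        = (\<Sum>V\<in>{V\<in>Pow E. Y \<subseteq> V}. (-1) ^ card (V - Y) * f (X \<union> V))"
      by (subst sum_Pow_Diff_eq_sum_supsets) (auto intro!: sum.cong simp: Un_absorb1)
    then show "moebius_upper D f (X \<union> Y)
        = (\<Sum>V\<in>{V\<in>Pow E. Y \<subseteq> V}. (-1) ^ card (V - Y) * f (X \<union> V))"
      by (simp add: moebius_upper_def E_def Diff_eq Int_ac Un_assoc)
  qed
  also have "\<dots> = (\<Sum>V\<in>Pow E. \<Sum>Y\<in>Pow V. (-1) ^ card (V - Y) * f (X \<union> V))"
    by (rule sum_Pow_Pow_swap[OF \<open>finite E\<close>, symmetric])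
  also have "\<dots> = (\<Sum>V\<in>Pow E. f (X \<union> V) * (\<Sum>Y\<in>Pow V. (-1) ^ card (V - Y)))"
    by (simp add: sum_distrib_left mult.commute)
  also have "\<dots> = (\<Sum>V\<in>Pow E. if V = {} then f (X \<union> V) else 0)"
    using \<open>finite E\<close> by (intro sum.cong refl) (auto simp: sum_Pow_neg_one_power_card_Diff finite_subset)
  also have "\<dots> = f X"
    using \<open>finite E\<close> by (simp add: sum.delta')
  finally show ?thesis
    by (simp add: E_def)
qed

lemma sum_Pow_supsets_zero_imp_zero:
  assumes "finite D"
    and closed: "\<And>T U. P T \<Longrightarrow> U \<subseteq> D \<Longrightarrow> P (T \<union> U)"
    and sums: "\<And>T. P T \<Longrightarrow> (\<Sum>U\<in>Pow (D - T). f (T \<union> U)) = 0"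
    and "P T"
  shows "f T = 0"
  using \<open>P T\<close>
proof (induction T rule: measure_induct_rule[of "\<lambda>T. card (D - T)"])
  case (less T)
  have "(\<Sum>U\<in>Pow (D - T) - {{}}. f (T \<union> U)) = 0"
  proof (rule sum.neutral, intro ballI)
    fix U assume U: "U \<in> Pow (D - T) - {{}}"
    then have "D - (T \<union> U) \<subset> D - T"
      by auto
    then have "card (D - (T \<union> U)) < card (D - T)"
      using \<open>finite D\<close> by (simp add: psubset_card_mono)
    moreover have "P (T \<union> U)"
      using U closed less.prems by blast
    ultimately show "f (T \<union> U) = 0"
      using less.IH by blast
  qed
  moreover have "(\<Sum>U\<in>Pow (D - T). f (T \<union> U)) = f (T \<union> {}) + (\<Sum>U\<in>Pow (D - T) - {{}}. f (T \<union> U))"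
    using \<open>finite D\<close> by (intro sum.remove) auto
  ultimately show "f T = 0"
    using sums[OF less.prems] by simp
qed

lemma kappa_singleton: "kappa W {s} B = W_cond W {s} B"
proof -
  have "Pow {s} - {{}} = {{s}}"
    by auto
  then show ?thesis
    by (simp add: kappa_def)
qed

lemma kappa_singleton_mem: "s \<in> B \<Longrightarrow> kappa W {s} B = 0"
  by (simp add: kappa_singleton W_cond_def)

lemma kappa_empty: "kappa W {} B = 1"
  by (simp add: kappa_def)

lemma kappa_insert:
  assumes "finite F" "x \<notin> F"
  shows "kappa W (insert x F) {} = kappa W F {} * kappa W {x} F"
proof -
  have W_cond_empty: "W_cond W S {} = W S" for S
    by (simp add: W_cond_def)
  have "Pow (insert x F) - {{}} = (Pow F - {{}}) \<union> insert x ` Pow F"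
    by (auto simp: Pow_insert)
  then have "kappa W (insert x F) {} = (\<Prod>S\<in>(Pow F - {{}}) \<union> insert x ` Pow F. W S)"
    by (simp add: kappa_def W_cond_empty)
  also have "\<dots> = (\<Prod>S\<in>Pow F - {{}}. W S) * (\<Prod>S\<in>insert x ` Pow F. W S)"
    using assms by (intro prod.union_disjoint) auto
  also have "(\<Prod>S\<in>insert x ` Pow F. W S) = (\<Prod>C\<in>Pow F. W (insert x C))"
  proof -
    have "inj_on (insert x) (Pow F)"
      using assms by (intro inj_onI) (metis PowD insert_ident subset_iff)
    then show ?thesis
      by (simp add: prod.reindex)
  qed
  also have "\<dots> = kappa W {x} F"
    using assms by (simp add: kappa_singleton W_cond_def)
  finally show ?thesis
    by (simp add: kappa_def W_cond_empty)
qed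

lemma sum_gamma_Pow: "finite U \<Longrightarrow> (\<Sum>N\<in>Pow U. gamma W s N T) = kappa W {s} (T \<union> U)"
  unfolding gamma_def by (rule moebius_inversion_Pow)

lemma sum_gamma_eq_sum_kappa_moebius_upper:
  assumes "finite \<Lambda>"
  shows "(\<Sum>N\<in>Pow (\<Lambda> - T). gamma W s N T * \<rho> (T \<union> N))
       = (\<Sum>U\<in>Pow (\<Lambda> - T). kappa W {s} (T \<union> U) * moebius_upper \<Lambda> \<rho> (T \<union> U))"
proof -
  let ?D = "\<Lambda> - T"
  have "finite ?D"
    using assms by simp
  have "\<rho> (T \<union> N) = (\<Sum>U\<in>{U\<in>Pow ?D. N \<subseteq> U}. moebius_upper \<Lambda> \<rho> (T \<union> U))" if "N \<in> Pow ?D" for N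
  proof -
    have "\<rho> (T \<union> N) = (\<Sum>Y\<in>Pow (?D - N). moebius_upper \<Lambda> \<rho> (T \<union> N \<union> Y))"
      using sum_moebius_upper[OF assms, where X="T \<union> N" and f=\<rho>] by (simp add: Diff_eq Int_ac)
    also have "\<dots> = (\<Sum>U\<in>{U\<in>Pow ?D. N \<subseteq> U}. moebius_upper \<Lambda> \<rho> (T \<union> N \<union> (U - N)))"
      using that by (intro sum_Pow_Diff_eq_sum_supsets) auto
    also have "\<dots> = (\<Sum>U\<in>{U\<in>Pow ?D. N \<subseteq> U}. moebius_upper \<Lambda> \<rho> (T \<union> U))"
      by (intro sum.cong refl) (auto intro!: arg_cong[where f="moebius_upper \<Lambda> \<rho>"])
    finally show ?thesis .
  qed
  then have "(\<Sum>N\<in>Pow ?D. gamma W s N T * \<rho> (T \<union> N))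
      = (\<Sum>N\<in>Pow ?D. \<Sum>U\<in>{U\<in>Pow ?D. N \<subseteq> U}. gamma W s N T * moebius_upper \<Lambda> \<rho> (T \<union> U))"
    by (simp add: sum_distrib_left)
  also have "\<dots> = (\<Sum>U\<in>Pow ?D. \<Sum>N\<in>Pow U. gamma W s N T * moebius_upper \<Lambda> \<rho> (T \<union> U))"
    by (rule sum_Pow_Pow_swap[OF \<open>finite ?D\<close>, symmetric])
  also have "\<dots> = (\<Sum>U\<in>Pow ?D. kappa W {s} (T \<union> U) * moebius_upper \<Lambda> \<rho> (T \<union> U))"
    using \<open>finite ?D\<close> by (intro sum.cong refl) (auto simp: sum_gamma_Pow finite_subset simp flip: sum_distrib_right)
  finally show ?thesis .
qed

locale kirkwood_salsburg_solution =
  fixes z :: "'a \<Rightarrow> complex"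
    and W :: "'a set \<Rightarrow> complex"
    and \<Lambda> :: "'a set"
    and \<rho> :: "'a set \<Rightarrow> complex"
  assumes finite_\<Lambda>: "finite \<Lambda>"
    and KS_eq: "\<And>s T. finite T \<Longrightarrow> s \<notin> T \<Longrightarrow>
        \<rho> (insert s T) = (\<Sum>N\<in>Pow (\<Lambda> - T). z s * gamma W s N T * \<rho> (T \<union> N))"
begin

abbreviation \<phi> :: "'a set \<Rightarrow> complex" where
  "\<phi> \<equiv> moebius_upper \<Lambda> \<rho>"

lemma sum_moebius_upper_insert_defect:
  assumes "finite T" "s \<notin> T"
  shows "(\<Sum>U\<in>Pow (\<Lambda> - insert s T).
            \<phi> (insert s (T \<union> U)) - z s * kappa W {s} (T \<union> U) * \<phi> (T \<union> U)) = 0"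
proof -
  have "(\<Sum>U\<in>Pow (\<Lambda> - T). kappa W {s} (T \<union> U) * \<phi> (T \<union> U))
      = (\<Sum>U\<in>Pow (\<Lambda> - insert s T). kappa W {s} (T \<union> U) * \<phi> (T \<union> U))"
    \<comment> \<open>the terms with \<open>s \<in> U\<close> vanish because \<open>\<kappa>(s|T \<union> U) = 0\<close>\<close>
    using finite_\<Lambda> by (intro sum.mono_neutral_right) (auto simp: kappa_singleton_mem)
  then have "\<rho> (insert s T) = z s * (\<Sum>U\<in>Pow (\<Lambda> - insert s T). kappa W {s} (T \<union> U) * \<phi> (T \<union> U))"
    using KS_eq[OF assms] sum_gamma_eq_sum_kappa_moebius_upper[OF finite_\<Lambda>, where T=T and s=s and \<rho>=\<rho>]
    by (simp add: mult.assoc flip: sum_distrib_left)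
  moreover have "\<rho> (insert s T) = (\<Sum>U\<in>Pow (\<Lambda> - insert s T). \<phi> (insert s (T \<union> U)))"
    using sum_moebius_upper[OF finite_\<Lambda>, where X="insert s T" and f=\<rho>] by simp
  ultimately show ?thesis
    by (simp add: sum_subtractf sum_distrib_left mult.assoc)
qed

lemma moebius_upper_insert:
  assumes "finite A" "s \<notin> A"
  shows "\<phi> (insert s A) = z s * kappa W {s} A * \<phi> A"
proof -
  have "\<phi> (insert s A) - z s * kappa W {s} A * \<phi> A = 0"
  proof (rule sum_Pow_supsets_zero_imp_zero[where D="\<Lambda> - {s}" and P="\<lambda>T. finite T \<and> s \<notin> T"])
    show "finite (\<Lambda> - {s})"
      using finite_\<Lambda> by simp
  next
    fix T U assume "finite T \<and> s \<notin> T" "U \<subseteq> \<Lambda> - {s}"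
    then show "finite (T \<union> U) \<and> s \<notin> T \<union> U"
      using finite_\<Lambda> finite_subset by auto
  next
    fix T assume "finite T \<and> s \<notin> T"
    moreover have "\<Lambda> - {s} - T = \<Lambda> - insert s T"
      by blast
    ultimately show "(\<Sum>U\<in>Pow (\<Lambda> - {s} - T).
        \<phi> (insert s (T \<union> U)) - z s * kappa W {s} (T \<union> U) * \<phi> (T \<union> U)) = 0"
      using sum_moebius_upper_insert_defect by simp
  qed (use assms in simp)
  then show ?thesis
    by simp
qed

lemma moebius_upper_eq_prod_kappa:
  "finite A \<Longrightarrow> \<phi> A = (\<Prod>y\<in>A. z y) * kappa W A {} * \<phi> {}"
proof (induction A rule: finite_induct)
  case empty
  then show ?case
    by (simp add: kappa_empty)
next
  case (insert x F)
  then show ?case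
    by (simp add: moebius_upper_insert kappa_insert mult_ac)
qed

lemma eq_Zpart_mult_moebius_upper:
  assumes "finite X"
  shows "\<rho> X = Zpart z W X \<Lambda> * \<phi> {}"
proof -
  have "\<rho> X = (\<Sum>Y\<in>Pow (\<Lambda> - X). \<phi> (X \<union> Y))"
    by (rule sum_moebius_upper[OF finite_\<Lambda>, symmetric])
  also have "\<dots> = (\<Sum>Y\<in>Pow (\<Lambda> - X). (\<Prod>y\<in>X \<union> Y. z y) * kappa W (X \<union> Y) {} * \<phi> {})"
    using assms finite_\<Lambda> by (intro sum.cong refl moebius_upper_eq_prod_kappa) (auto intro: finite_subset)
  finally show ?thesis
    by (simp add: Zpart_def sum_distrib_right)
qed

end

theorem proposition6p1:
  fixes z :: "'a::countable \<Rightarrow> complex"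
    and W :: "'a set \<Rightarrow> complex"
    and \<Lambda> :: "'a set"
    and \<rho> :: "'a set \<Rightarrow> complex"
  assumes fin: "finite \<Lambda>"
    and eq: "\<And>s T. finite T \<Longrightarrow> s \<notin> T \<Longrightarrow>
        \<rho> (insert s T) = (\<Sum>N\<in>Pow (\<Lambda> - T). z s * gamma W s N T * \<rho> (T \<union> N))"
  shows "(\<exists>c::complex. \<forall>X. finite X \<longrightarrow> \<rho> X = Zpart z W X \<Lambda> * c)
         \<and> (\<rho> {} \<noteq> 0 \<longrightarrow> Zpart z W {} \<Lambda> \<noteq> 0 \<and>
              (\<forall>X. finite X \<longrightarrow> Rcorr z W X \<Lambda> = \<rho> X / \<rho> {}))"
proof -
  interpret kirkwood_salsburg_solution z W \<Lambda> \<rho>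
    using fin eq by unfold_locales
  show ?thesis
  proof (intro conjI impI allI exI)
    assume "\<rho> {} \<noteq> 0"
    then show "Zpart z W {} \<Lambda> \<noteq> 0"
      using eq_Zpart_mult_moebius_upper[of "{}"] by auto
    fix X :: "'a set"
    assume "finite X"
    then show "Rcorr z W X \<Lambda> = \<rho> X / \<rho> {}"
      using eq_Zpart_mult_moebius_upper[of "{}"] eq_Zpart_mult_moebius_upper[of X] \<open>\<rho> {} \<noteq> 0\<close>
      by (auto simp: Rcorr_def)
  qed (use eq_Zpart_mult_moebius_upper in blast)
qed

end
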